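(* Let $N\ge 3$, $G>0$, $m_1,\dots,m_N>0$, let $I$ be a nondegenerate interval, and let $r_1,\dots,r_N:I\to\mathbb{R}^3$ be $C^2$ functions with $r_j(t)\neq r_k(t)$ for all $t\in I$, $j\neq k$, satisfying for all $1\le j<k\le N$ $$(r_j-r_k)''=G\sum_{\substack{i=1\\ i\neq j}}^{N}\frac{m_i(r_i-r_j)}{\|r_i-r_j\|^3}-G\sum_{\substack{i=1\\ i\neq k}}^{N}\frac{m_i(r_i-r_k)}{\|r_i-r_k\|^3}.$$ Then there are two distinct pairs $(j_1,j_2)\neq(j_3,j_4)$ with $1\le j_1<j_2\le N$ and $1\le j_3<j_4\le N$ such that neither $(r_{j_1}-r_{j_2})''$ nor $(r_{j_3}-r_{j_4})''$ is identically $\vec 0$ on $I$.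
   Context: $\|\cdot\|$ is the Euclidean norm on $\mathbb{R}^3$. *)

theory Defs
  imports "HOL-Analysis.Analysis"
begin

end

theory Submission
  imports Defs
begin

text \<open>It suffices to look at a single instant. There, choose two bodies \<open>j, k\<close> realising the
  diameter of the configuration. Every other body lies in the ball of radius \<open>|P\<^sub>j - P\<^sub>k|\<close>
  around \<open>P\<^sub>k\<close> and in the one around \<open>P\<^sub>j\<close>, so all attractions on \<open>j\<close> have a component
  towards \<open>k\<close> and vice versa; hence the accelerations of \<open>j\<close> and \<open>k\<close> differ. A third body
  then differs in acceleration from \<open>j\<close> or from \<open>k\<close>, which gives a second pair.\<close>

definition newton_accel :: "(nat \<Rightarrow> real) \<Rightarrow> nat set \<Rightarrow> (nat \<Rightarrow> 'a::real_inner) \<Rightarrow> nat \<Rightarrow> 'a"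
  where "newton_accel m A P j = (\<Sum>i\<in>A - {j}. (m i / norm (P i - P j) ^ 3) *\<^sub>R (P i - P j))"

lemma inner_neg_if_norm_add_le:
  fixes w v :: "'a::real_inner"
  assumes "norm (w + v) \<le> norm v" "w \<noteq> 0"
  shows "inner w v < 0"
proof -
  have "inner (w + v) (w + v) \<le> inner v v"
    using assms(1) by (simp add: power_mono flip: power2_norm_eq_inner)
  hence "inner w w + 2 * inner w v \<le> 0"
    by (simp add: inner_add inner_commute algebra_simps)
  moreover have "inner w w > 0" using assms(2) by simp
  ultimately show ?thesis by linarith
qed

lemma inner_newton_accel_neg:
  fixes P :: "nat \<Rightarrow> 'a::real_inner"
  assumes "finite A" "A - {j} \<noteq> {}"
    and m: "\<And>i. i \<in> A - {j} \<Longrightarrow> m i > 0"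
    and neg: "\<And>i. i \<in> A - {j} \<Longrightarrow> inner (P i - P j) v < 0"
  shows "inner (newton_accel m A P j) v < 0"
proof -
  have "inner (newton_accel m A P j) v
      = (\<Sum>i\<in>A - {j}. (m i / norm (P i - P j) ^ 3) * inner (P i - P j) v)"
    by (simp add: newton_accel_def inner_sum_left)
  also have "\<dots> < (\<Sum>i\<in>A - {j}. 0)"
  proof (rule sum_strict_mono)
    fix i assume i: "i \<in> A - {j}"
    have "P i \<noteq> P j" using neg[OF i] by auto
    hence "m i / norm (P i - P j) ^ 3 > 0" using m[OF i] by simp
    thus "(m i / norm (P i - P j) ^ 3) * inner (P i - P j) v < 0"
      using neg[OF i] mult_pos_neg by blast
  qed (use assms in auto)
  finally show ?thesis by simp
qed

lemma finite_diameter_pair: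
  fixes P :: "nat \<Rightarrow> 'a::real_normed_vector"
  assumes "finite A" "j0 \<in> A" "k0 \<in> A" "j0 \<noteq> k0"
  obtains j k where "j \<in> A" "k \<in> A" "j \<noteq> k"
    "\<And>i i'. i \<in> A \<Longrightarrow> i' \<in> A \<Longrightarrow> norm (P i - P i') \<le> norm (P j - P k)"
proof -
  define S where "S = {p \<in> A \<times> A. fst p \<noteq> snd p}"
  define f where "f q = norm (P (fst q) - P (snd q))" for q
  have S: "finite S" "(j0, k0) \<in> S" using assms by (auto simp: S_def)
  then obtain p where p: "p \<in> S" "f p = Max (f ` S)"
    by (metis (mono_tags, lifting) Max_in empty_iff finite_imageI image_iff image_is_empty)
  have max: "norm (P (fst q) - P (snd q)) \<le> norm (P (fst p) - P (snd p))" if "q \<in> S" for q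
    using Max_ge[of "f ` S" "f q"] S that p by (simp add: f_def)
  show ?thesis
  proof (rule that[of "fst p" "snd p"])
    fix i i' assume "i \<in> A" "i' \<in> A"
    then show "norm (P i - P i') \<le> norm (P (fst p) - P (snd p))"
      using max[of "(i, i')"] by (cases "i = i'") (auto simp: S_def)
  qed (use p in \<open>auto simp: S_def\<close>)
qed

lemma newton_accel_diameter_pair_differ:
  fixes P :: "nat \<Rightarrow> 'a::real_inner"
  assumes "finite A" "j \<in> A" "k \<in> A" "j \<noteq> k"
    and m: "\<And>i. i \<in> A \<Longrightarrow> m i > 0"
    and inj: "inj_on P A"
    and diam: "\<And>i i'. i \<in> A \<Longrightarrow> i' \<in> A \<Longrightarrow> norm (P i - P i') \<le> norm (P j - P k)"
  shows "newton_accel m A P j \<noteq> newton_accel m A P k"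
proof -
  define v where "v = P j - P k"
  have "inner (newton_accel m A P j) v < 0"
  proof (rule inner_newton_accel_neg)
    fix i assume i: "i \<in> A - {j}"
    show "inner (P i - P j) v < 0"
    proof (rule inner_neg_if_norm_add_le)
      show "norm (P i - P j + v) \<le> norm v" using diam[of i k] i assms by (simp add: v_def)
      show "P i - P j \<noteq> 0" using inj i assms by (auto dest: inj_onD)
    qed
  qed (use assms in auto)
  moreover have "inner (newton_accel m A P k) (- v) < 0"
  proof (rule inner_newton_accel_neg)
    fix i assume i: "i \<in> A - {k}"
    show "inner (P i - P k) (- v) < 0"
    proof (rule inner_neg_if_norm_add_le)
      show "norm (P i - P k + - v) \<le> norm (- v)"
        using diam[of i j] i assms by (simp add: v_def norm_minus_commute)
      show "P i - P k \<noteq> 0" using inj i assms by (auto dest: inj_onD)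
    qed
  qed (use assms in auto)
  ultimately show ?thesis by auto
qed

lemma newton_accels_two_differing_pairs:
  fixes P :: "nat \<Rightarrow> 'a::real_inner"
  assumes "finite A" "card A \<ge> 3"
    and "\<And>i. i \<in> A \<Longrightarrow> m i > 0" "inj_on P A"
  obtains j k l q where "j \<in> A" "k \<in> A" "l \<in> A" "q \<in> {j, k}" "j \<noteq> k" "l \<noteq> j" "l \<noteq> k"
    "newton_accel m A P j \<noteq> newton_accel m A P k"
    "newton_accel m A P l \<noteq> newton_accel m A P q"
proof -
  obtain j0 k0 l0 where "j0 \<in> A" "k0 \<in> A" "l0 \<in> A" "j0 \<noteq> k0"
    using assms(2) by (auto simp: card_le_Suc_iff numeral_3_eq_3)
  then obtain j k where jk: "j \<in> A" "k \<in> A" "j \<noteq> k"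
    and diam: "\<And>i i'. i \<in> A \<Longrightarrow> i' \<in> A \<Longrightarrow> norm (P i - P i') \<le> norm (P j - P k)"
    using finite_diameter_pair[OF assms(1)] by metis
  have differ: "newton_accel m A P j \<noteq> newton_accel m A P k"
    using newton_accel_diameter_pair_differ[OF assms(1) jk _ assms(4) diam] assms(3) by blast
  have "card {j, k} < card A" using jk assms(2) by simp
  then have "\<not> A \<subseteq> {j, k}" by (metis card_mono finite.emptyI finite.insertI not_le)
  then obtain l where l: "l \<in> A" "l \<noteq> j" "l \<noteq> k" by blast
  have "\<exists>q\<in>{j, k}. newton_accel m A P l \<noteq> newton_accel m A P q" using differ by auto
  with jk l differ that show ?thesis by blast
qed

theorem corollary2:
  fixes N :: nat and G :: real and m :: "nat \<Rightarrow> real" and I :: "real set"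
    and r r' r'' :: "nat \<Rightarrow> real \<Rightarrow> real ^ 3"
  assumes N: "N \<ge> 3"
    and G: "G > 0"
    and m: "\<And>i. i \<in> {1..N} \<Longrightarrow> m i > 0"
    and I_int: "is_interval I"
    and I_nondeg: "\<exists>a\<in>I. \<exists>b\<in>I. a < b"
    and d1: "\<And>j t. j \<in> {1..N} \<Longrightarrow> t \<in> I \<Longrightarrow>
               (r j has_vector_derivative r' j t) (at t within I)"
    and d2: "\<And>j t. j \<in> {1..N} \<Longrightarrow> t \<in> I \<Longrightarrow>
               (r' j has_vector_derivative r'' j t) (at t within I)"
    and c2: "\<And>j. j \<in> {1..N} \<Longrightarrow> continuous_on I (r'' j)"
    and distinct: "\<And>j k t. j \<in> {1..N} \<Longrightarrow> k \<in> {1..N} \<Longrightarrow> j \<noteq> k \<Longrightarrow> t \<in> I \<Longrightarrow>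
               r j t \<noteq> r k t"
    and eqn: "\<And>j k t. 1 \<le> j \<Longrightarrow> j < k \<Longrightarrow> k \<le> N \<Longrightarrow> t \<in> I \<Longrightarrow>
               r'' j t - r'' k t =
                 G *\<^sub>R (\<Sum>i\<in>{1..N} - {j}. (m i / norm (r i t - r j t) ^ 3) *\<^sub>R (r i t - r j t))
               - G *\<^sub>R (\<Sum>i\<in>{1..N} - {k}. (m i / norm (r i t - r k t) ^ 3) *\<^sub>R (r i t - r k t))"
  shows "\<exists>j1 j2 j3 j4. 1 \<le> j1 \<and> j1 < j2 \<and> j2 \<le> N \<and> 1 \<le> j3 \<and> j3 < j4 \<and> j4 \<le> N \<and>
           (j1, j2) \<noteq> (j3, j4) \<and>
           (\<exists>t\<in>I. r'' j1 t - r'' j2 t \<noteq> 0) \<and> (\<exists>t\<in>I. r'' j3 t - r'' j4 t \<noteq> 0)"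
proof -
  obtain t where t: "t \<in> I" using I_nondeg by blast
  define a where "a = newton_accel m {1..N} (\<lambda>i. r i t)"
  have inj: "inj_on (\<lambda>i. r i t) {1..N}" using distinct t by (meson inj_onI)
  have card: "card {1..N} \<ge> 3" using N by simp
  obtain j k l q where jkl: "j \<in> {1..N}" "k \<in> {1..N}" "l \<in> {1..N}" "q \<in> {j, k}"
      "j \<noteq> k" "l \<noteq> j" "l \<noteq> k" "a j \<noteq> a k" "a l \<noteq> a q"
    by (rule newton_accels_two_differing_pairs[OF finite_atLeastAtMost card m inj])
      (simp_all add: a_def)
  have sorted_pair: "r'' (min i i') t - r'' (max i i') t \<noteq> 0"
    if "i \<in> {1..N}" "i' \<in> {1..N}" "a i \<noteq> a i'" for i i'
  proof -
    have "i \<noteq> i'" using that by auto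
    have "r'' (min i i') t - r'' (max i i') t = G *\<^sub>R (a (min i i') - a (max i i'))"
      using eqn[of "min i i'" "max i i'" t] that \<open>i \<noteq> i'\<close> t
      by (simp add: a_def newton_accel_def scaleR_diff_right min_def max_def)
    moreover have "a (min i i') \<noteq> a (max i i')" using that by (simp add: min_def max_def)
    ultimately show ?thesis using G by simp
  qed
  have "(min j k, max j k) \<noteq> (min l q, max l q)" using jkl by (auto simp: min_def max_def)
  moreover have "1 \<le> min i i' \<and> min i i' < max i i' \<and> max i i' \<le> N"
    if "i \<in> {1..N}" "i' \<in> {1..N}" "i \<noteq> i'" for i i' using that by auto
  ultimately show ?thesis
    using jkl sorted_pair[of j k] sorted_pair[of l q] t by blast
qed

end
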